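(* Let $k\geq 2$ be an integer. For every finite simple graph $G$ of order $n$ and size $m$ with minimum degree $\delta(G)\geq k$, $$\gamma_{\times k}(G)\geq \frac{(\delta(G)+k)\,n-2m}{\delta(G)+1}.$$
   Context: All graphs are finite and simple, with vertex set $V(G)$; order is the number of vertices and size the number of edges. For $v\in V(G)$ and $D\subseteq V(G)$, $\deg_D(v)$ is the number of neighbours of $v$ in $D$. $\delta(G)$ denotes the minimum degree. For a positive integer $k\leq \delta(G)+1$, a $k$-tuple dominating set of $G$ is a set $D\subseteq V(G)$ such that $\deg_D(v)\geq k$ for every $v\in V(G)\setminus D$ and $\deg_D(v)\geq k-1$ for every $v\in D$; the $k$-tuple domination number $\gamma_{\times k}(G)$ is the minimum cardinality of a $k$-tuple dominating set. *)

theory Defs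
  imports Complex_Main
begin

definition simple_graph :: "'a set \<Rightarrow> ('a \<Rightarrow> 'a \<Rightarrow> bool) \<Rightarrow> bool" where
  "simple_graph V E \<longleftrightarrow> finite V \<and> (\<forall>u v. E u v \<longrightarrow> u \<in> V \<and> v \<in> V)
     \<and> (\<forall>v. \<not> E v v) \<and> (\<forall>u v. E u v \<longrightarrow> E v u)"

definition edge_set :: "'a set \<Rightarrow> ('a \<Rightarrow> 'a \<Rightarrow> bool) \<Rightarrow> 'a set set" where
  "edge_set V E = {{u, v} | u v. u \<in> V \<and> v \<in> V \<and> E u v}"

definition deg_in :: "('a \<Rightarrow> 'a \<Rightarrow> bool) \<Rightarrow> 'a set \<Rightarrow> 'a \<Rightarrow> nat" where
  "deg_in E D v = card {u \<in> D. E v u}"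

definition min_degree :: "'a set \<Rightarrow> ('a \<Rightarrow> 'a \<Rightarrow> bool) \<Rightarrow> nat" where
  "min_degree V E = Min ((deg_in E V) ` V)"

definition k_tuple_dominating :: "'a set \<Rightarrow> ('a \<Rightarrow> 'a \<Rightarrow> bool) \<Rightarrow> nat \<Rightarrow> 'a set \<Rightarrow> bool" where
  "k_tuple_dominating V E k D \<longleftrightarrow> D \<subseteq> V
     \<and> (\<forall>v \<in> V - D. deg_in E D v \<ge> k)
     \<and> (\<forall>v \<in> D. deg_in E D v + 1 \<ge> k)"

definition k_tuple_domination_number :: "'a set \<Rightarrow> ('a \<Rightarrow> 'a \<Rightarrow> bool) \<Rightarrow> nat \<Rightarrow> nat" where
  "k_tuple_domination_number V E k = Min (card ` {D. k_tuple_dominating V E k D})"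

end

theory Submission imports Defs begin

text \<open>Double-count the degree sum, which is at most 2m, by splitting each neighbourhood
  along a k-tuple dominating set D. Vertices outside D have at least k neighbours in D and
  vertices of D at least k - 1, so the neighbours in D contribute at least kn - |D|.
  By symmetry the neighbours in V - D contribute the sum of the degrees of the vertices
  of V - D, which is at least \<delta>(n - |D|). Hence 2m \<ge> (\<delta> + k)n - (\<delta> + 1)|D|
  for every k-tuple dominating set, in particular for a minimum one.\<close>

lemma deg_in_eq_sum:
  assumes "finite W"
  shows "deg_in E W v = (\<Sum>u\<in>W. if E v u then 1 else 0)"
  unfolding deg_in_def using assms by (simp add: sum.If_cases Int_def conj_commute)

lemma sum_deg_in_swap:
  assumes "finite V" "finite W" "\<And>u v. E u v \<Longrightarrow> E v u"
  shows "(\<Sum>v\<in>V. deg_in E W v) = (\<Sum>u\<in>W. deg_in E V u)"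
proof -
  have sym: "E v u = E u v" for u v using assms(3) by blast
  have "(\<Sum>v\<in>V. deg_in E W v) = (\<Sum>v\<in>V. \<Sum>u\<in>W. (if E v u then 1 else 0::nat))"
    using assms(2) by (simp add: deg_in_eq_sum)
  also have "\<dots> = (\<Sum>u\<in>W. \<Sum>v\<in>V. (if E u v then 1 else 0::nat))"
    by (subst sum.swap) (simp add: sym)
  also have "\<dots> = (\<Sum>u\<in>W. deg_in E V u)"
    using assms(1) by (simp add: deg_in_eq_sum)
  finally show ?thesis .
qed

lemma deg_in_Diff:
  assumes "finite W" "D \<subseteq> W"
  shows "deg_in E W v = deg_in E D v + deg_in E (W - D) v"
proof -
  have "{u \<in> W. E v u} = {u \<in> D. E v u} \<union> {u \<in> W - D. E v u}" using assms(2) by auto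
  moreover have "finite D" using assms finite_subset by blast
  ultimately show ?thesis
    unfolding deg_in_def using assms(1) by (simp add: card_Un_disjoint Int_def)
qed

lemma min_degree_le_deg_in:
  assumes "finite V" "v \<in> V"
  shows "min_degree V E \<le> deg_in E V v"
  unfolding min_degree_def using assms by (intro Min_le) auto

lemma sum_deg_in_le_twice_card_edge_set:
  assumes "simple_graph V E"
  shows "(\<Sum>v\<in>V. deg_in E V v) \<le> 2 * card (edge_set V E)"
proof -
  have fV: "finite V" using assms unfolding simple_graph_def by blast
  define P where "P = (SIGMA v:V. {u\<in>V. E v u})"
  define F where "F e = {p\<in>P. {fst p, snd p} = e}" for e
  have fES: "finite (edge_set V E)"
    using fV by (rule finite_subset[rotated, OF finite_Pow_iff[THEN iffD2]])
      (auto simp: edge_set_def)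
  have "(\<Sum>v\<in>V. deg_in E V v) = card P"
    unfolding P_def deg_in_def using fV by (simp add: card_SigmaI)
  also have "P \<subseteq> (\<Union>e\<in>edge_set V E. F e)"
    unfolding P_def F_def edge_set_def by fastforce
  then have "card P \<le> card (\<Union>e\<in>edge_set V E. F e)"
    using fES fV by (intro card_mono) (auto simp: F_def P_def)
  also have "\<dots> \<le> (\<Sum>e\<in>edge_set V E. card (F e))"
    using fES by (rule card_UN_le)
  also have "\<dots> \<le> (\<Sum>e\<in>edge_set V E. 2)"
  proof (rule sum_mono)
    fix e assume "e \<in> edge_set V E"
    then obtain a b where e: "e = {a, b}" unfolding edge_set_def by auto
    have "F e \<subseteq> {(a, b), (b, a)}" unfolding F_def e by (auto simp: doubleton_eq_iff)
    then have "card (F e) \<le> card {(a, b), (b, a)}" by (intro card_mono) auto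
    also have "\<dots> \<le> 2" by (rule card_insert_le_m1) auto
    finally show "card (F e) \<le> 2" .
  qed
  finally show ?thesis by simp
qed

lemma min_degree_mult_card_le_sum_deg_in:
  assumes "simple_graph V E" "W \<subseteq> V"
  shows "min_degree V E * card W \<le> (\<Sum>v\<in>V. deg_in E W v)"
proof -
  have fV: "finite V" and sym: "\<And>u v. E u v \<Longrightarrow> E v u"
    using assms(1) unfolding simple_graph_def by blast+
  have fW: "finite W" using fV assms(2) finite_subset by blast
  have "min_degree V E * card W = (\<Sum>u\<in>W. min_degree V E)" by simp
  also have "\<dots> \<le> (\<Sum>u\<in>W. deg_in E V u)"
    using assms(2) fV by (intro sum_mono min_degree_le_deg_in) auto
  also have "\<dots> = (\<Sum>v\<in>V. deg_in E W v)"
    using fV fW sym by (rule sum_deg_in_swap[symmetric])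
  finally show ?thesis .
qed

lemma k_tuple_dominating_sum_deg_in_ge:
  assumes "finite V" "k_tuple_dominating V E k D"
  shows "k * card V \<le> (\<Sum>v\<in>V. deg_in E D v) + card D"
proof -
  have DV: "D \<subseteq> V" using assms(2) unfolding k_tuple_dominating_def by blast
  have "k * card V = (\<Sum>v\<in>V - D. k) + (\<Sum>v\<in>D. k)"
    using sum.subset_diff[OF DV assms(1), of "\<lambda>_. k"] by (simp add: mult.commute)
  also have "\<dots> \<le> (\<Sum>v\<in>V - D. deg_in E D v) + (\<Sum>v\<in>D. deg_in E D v + 1)"
    using assms(2) unfolding k_tuple_dominating_def by (intro add_mono sum_mono) auto
  also have "\<dots> = (\<Sum>v\<in>V. deg_in E D v) + card D"
    using sum.subset_diff[OF DV assms(1), of "deg_in E D"] by (simp add: sum.distrib del: add_Suc_right)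
  finally show ?thesis .
qed

lemma k_tuple_dominating_card_lower_bound:
  assumes "simple_graph V E" "k_tuple_dominating V E k D"
  shows "(min_degree V E + k) * card V \<le> 2 * card (edge_set V E) + (min_degree V E + 1) * card D"
proof -
  have fV: "finite V" using assms(1) unfolding simple_graph_def by blast
  have DV: "D \<subseteq> V" using assms(2) unfolding k_tuple_dominating_def by blast
  have card_V: "card V = card (V - D) + card D"
    using fV DV by (metis card_Diff_subset card_mono finite_subset le_add_diff_inverse2)
  have "(\<Sum>v\<in>V. deg_in E D v) + (\<Sum>v\<in>V. deg_in E (V - D) v) = (\<Sum>v\<in>V. deg_in E V v)"
    using fV DV by (simp add: deg_in_Diff sum.distrib)
  then have "(\<Sum>v\<in>V. deg_in E D v) + (\<Sum>v\<in>V. deg_in E (V - D) v) \<le> 2 * card (edge_set V E)"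
    using sum_deg_in_le_twice_card_edge_set[OF assms(1)] by simp
  moreover have "k * card V \<le> (\<Sum>v\<in>V. deg_in E D v) + card D"
    using fV assms(2) by (rule k_tuple_dominating_sum_deg_in_ge)
  moreover have "min_degree V E * card (V - D) \<le> (\<Sum>v\<in>V. deg_in E (V - D) v)"
    using assms(1) by (rule min_degree_mult_card_le_sum_deg_in) blast
  ultimately show ?thesis
    unfolding card_V by (simp add: algebra_simps)
qed

lemma k_tuple_domination_number_attained:
  assumes "finite V" "k \<le> min_degree V E + 1"
  obtains D where "k_tuple_dominating V E k D" "card D = k_tuple_domination_number V E k"
proof -
  have "k_tuple_dominating V E k V"
    unfolding k_tuple_dominating_def
    using assms min_degree_le_deg_in[OF assms(1), of _ E] by fastforce
  moreover have "finite {D. k_tuple_dominating V E k D}"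
    using assms(1) by (rule finite_subset[rotated, OF finite_Pow_iff[THEN iffD2]])
      (auto simp: k_tuple_dominating_def)
  ultimately have "k_tuple_domination_number V E k \<in> card ` {D. k_tuple_dominating V E k D}"
    unfolding k_tuple_domination_number_def by (intro Min_in) auto
  with that show ?thesis by auto
qed

theorem mainTheorem4:
  fixes V :: "'a set" and E :: "'a \<Rightarrow> 'a \<Rightarrow> bool" and k :: nat
  assumes "k \<ge> 2"
    and "simple_graph V E"
    and "V \<noteq> {}"
    and "min_degree V E \<ge> k"
  shows "real (k_tuple_domination_number V E k) \<ge>
    ((real (min_degree V E) + real k) * real (card V) - 2 * real (card (edge_set V E)))
      / (real (min_degree V E) + 1)"
proof -
  have "finite V" using assms(2) unfolding simple_graph_def by blast
  moreover have "k \<le> min_degree V E + 1" using assms(4) by simp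
  ultimately obtain D where D: "k_tuple_dominating V E k D"
    and card_D: "card D = k_tuple_domination_number V E k"
    by (rule k_tuple_domination_number_attained)
  have "real ((min_degree V E + k) * card V)
      \<le> real (2 * card (edge_set V E) + (min_degree V E + 1) * card D)"
    using k_tuple_dominating_card_lower_bound[OF assms(2) D] by (rule of_nat_mono)
  then show ?thesis
    unfolding card_D by (simp add: pos_divide_le_eq algebra_simps)
qed

end
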